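(* Fix $0<R<1$, $\varepsilon>0$ with $1-R-\varepsilon>0$, a positive integer $\ell$, and let $q$ be a prime power with $q\ge \max\left(\ell^{\frac{8R}{\varepsilon}+6},\ \ell\cdot 2^{4/\varepsilon}\right)$. Let $\mathcal{C}\subseteq \mathbb{F}_q^n$ be a random linear code of rate $R$. Then with probability at least $1-2q^{-\varepsilon n/8}$, $\mathcal{C}$ is $\left(1-R-\varepsilon,\ \ell,\ L\right)$-list-recoverable with $L\le \left(\frac{2\ell}{\varepsilon}\right)^{2\ell/\varepsilon}$.
   Context: A random linear code (RLC) of rate $R$ in $\mathbb{F}_q^n$ is the column span of a generator matrix $\mathbf{G}\in\mathbb{F}_q^{n\times Rn}$ whose entries are independent and uniformly random elements of $\mathbb{F}_q$ (here $Rn$ is an integer). For $x\in\mathbb{F}_q^n$ and sets $S_1,\dots,S_n\subseteq\mathbb{F}_q$, the agreement set is $\{i\in[n]: x[i]\in S_i\}$. The $\rho$-radius $\ell$-list-recovery ball $B(\rho,S_1\times\cdots\times S_n)$, for sets $S_i$ of size $\ell$, is the set of $x\in\mathbb{F}_q^n$ whose agreement set with $S_1,\dots,S_n$ has size at least $(1-\rho)n$. A code $\mathcal{C}\subseteq\mathbb{F}_q^n$ is $(\rho,\ell,L)$-list-recoverable if every $\rho$-radius $\ell$-list-recovery ball contains at most $L$ codewords of $\mathcal{C}$. *)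

theory Defs
  imports Complex_Main "HOL-Library.Cardinality"
begin

text \<open>Vectors of F_q^n are modelled as functions nat => 'a that vanish outside {..<n};
  an n x k matrix as a function nat => nat => 'a vanishing outside {..<n} x {..<k}.\<close>

definition vecs :: "nat \<Rightarrow> (nat \<Rightarrow> 'a::zero) set" where
  "vecs n = {x. \<forall>i\<ge>n. x i = 0}"

definition mats :: "nat \<Rightarrow> nat \<Rightarrow> (nat \<Rightarrow> nat \<Rightarrow> 'a::zero) set" where
  "mats n k = {G. \<forall>i j. (n \<le> i \<or> k \<le> j) \<longrightarrow> G i j = 0}"

definition lin_code :: "nat \<Rightarrow> nat \<Rightarrow> (nat \<Rightarrow> nat \<Rightarrow> 'a::comm_semiring_1) \<Rightarrow> (nat \<Rightarrow> 'a) set" where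
  "lin_code n k G = (\<lambda>m. \<lambda>i. if i < n then (\<Sum>j<k. G i j * m j) else 0) ` vecs k"

definition lr_ball :: "nat \<Rightarrow> real \<Rightarrow> (nat \<Rightarrow> 'a set) \<Rightarrow> (nat \<Rightarrow> 'a::zero) set" where
  "lr_ball n \<rho> S = {x \<in> vecs n. real (card {i\<in>{..<n}. x i \<in> S i}) \<ge> (1 - \<rho>) * real n}"

definition list_recoverable :: "nat \<Rightarrow> real \<Rightarrow> nat \<Rightarrow> real \<Rightarrow> (nat \<Rightarrow> 'a::zero) set \<Rightarrow> bool" where
  "list_recoverable n \<rho> l L C \<longleftrightarrow>
     (\<forall>S :: nat \<Rightarrow> 'a set. (\<forall>i<n. card (S i) = l) \<longrightarrow> real (card (lr_ball n \<rho> S \<inter> C)) \<le> L)"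

end

theory Submission
  imports Defs "HOL-Library.FuncSet"
begin

text \<open>
  Call G bad if some nonzero codeword vanishes on more than (R + \<epsilon>/2)n coordinates, or if some
  list-recovery ball contains a staircase of length \<sigma> = \<lfloor>2l/\<epsilon>\<rfloor> + 2: codewords
  a_0, ..., a_(\<sigma>-1) and coordinates p_j at which a_j is the first of them to leave a_0.
  For good G, the codewords in a ball agree with the lists on at least (R + \<epsilon>)n coordinates but
  pairwise on at most (R + \<epsilon>/2)n, and double counting on the coordinates where they are not
  constant bounds their number by (2l/\<epsilon>)^(2l/\<epsilon>), by induction on the staircase length.

  Both bad events have probability at most q^(-\<epsilon>n/8). For the first this is a union bound over
  messages and zero sets. For the second, the message differences of a staircase are triangular with
  respect to the rows G_(p_j), so they impose independent uniform conditions on every row: each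
  coordinate at which a codeword repeats the symbol of an earlier one costs a factor l/q, and the
  agreements force at least \<sigma>(R + \<epsilon>)n - l n such repetitions. A union bound over the differences
  and the repetition patterns concludes.
\<close>

section \<open>Counting\<close>

lemma sum_card_filter_swap:
  assumes "finite X" "finite I"
  shows "(\<Sum>u\<in>X. card {i\<in>I. Q u i}) = (\<Sum>i\<in>I. card {u\<in>X. Q u i})"
proof -
  have "(\<Sum>u\<in>X. card {i\<in>I. Q u i}) = (\<Sum>u\<in>X. \<Sum>i\<in>I. if Q u i then 1 else 0)"
    using assms sum.inter_filter[of I "\<lambda>_. 1::nat"] by simp
  also have "\<dots> = (\<Sum>i\<in>I. \<Sum>u\<in>X. if Q u i then 1 else 0)"
    by (rule sum.swap)
  also have "\<dots> = (\<Sum>i\<in>I. card {u\<in>X. Q u i})"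
    using assms sum.inter_filter[of X "\<lambda>_. 1::nat"] by simp
  finally show ?thesis .
qed

lemma card_mult_le_double_counting:
  assumes "finite X" "finite I"
    and "\<And>u. u \<in> X \<Longrightarrow> a \<le> real (card {i\<in>I. P u i})"
    and "\<And>i. i \<in> I \<Longrightarrow> real (card {u\<in>X. P u i}) \<le> b"
  shows "real (card X) * a \<le> real (card I) * b"
proof -
  have "real (card X) * a \<le> (\<Sum>u\<in>X. real (card {i\<in>I. P u i}))"
    using sum_mono[of X "\<lambda>_. a", OF assms(3)] by (simp add: mult.commute)
  also have "\<dots> = (\<Sum>i\<in>I. real (card {u\<in>X. P u i}))"
    using sum_card_filter_swap[OF assms(1,2), of P] by (simp flip: of_nat_sum)
  also have "\<dots> \<le> real (card I) * b"
    using sum_mono[of I _ "\<lambda>_. b", OF assms(4)] by simp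
  finally show ?thesis .
qed

lemma card_filter_le_card_diff_add:
  assumes "finite I" "Z \<subseteq> I"
  shows "card {i\<in>I. P i} \<le> card {i\<in>I - Z. P i} + card Z"
proof -
  have "card {i\<in>I. P i} \<le> card ({i\<in>I - Z. P i} \<union> Z)"
    using assms by (intro card_mono) (auto intro: finite_subset)
  also have "\<dots> \<le> card {i\<in>I - Z. P i} + card Z"
    by (rule card_Un_le)
  finally show ?thesis .
qed

lemma card_preimage_le_by_fibres:
  assumes "finite S" "\<And>v. real (card {u\<in>X. f u = v}) \<le> M"
  shows "real (card {u\<in>X. f u \<in> S}) \<le> real (card S) * M"
proof -
  have "{u\<in>X. f u \<in> S} = (\<Union>v\<in>S. {u\<in>X. f u = v})"
    by auto
  then have "card {u\<in>X. f u \<in> S} \<le> (\<Sum>v\<in>S. card {u\<in>X. f u = v})"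
    using card_UN_le[OF assms(1), of "\<lambda>v. {u\<in>X. f u = v}"] by simp
  then have "real (card {u\<in>X. f u \<in> S}) \<le> (\<Sum>v\<in>S. real (card {u\<in>X. f u = v}))"
    by (simp flip: of_nat_sum)
  also have "\<dots> \<le> real (card S) * M"
    using sum_mono[of S _ "\<lambda>_. M", OF assms(2)] by simp
  finally show ?thesis .
qed

lemma card_le_union_bound:
  assumes "finite I" "X \<subseteq> (\<Union>i\<in>I. F i)"
    and "\<And>i. i \<in> I \<Longrightarrow> finite (F i)" "\<And>i. i \<in> I \<Longrightarrow> real (card (F i)) \<le> M"
  shows "real (card X) \<le> real (card I) * M"
proof -
  have "card X \<le> card (\<Union>i\<in>I. F i)"
    using assms(1-3) by (intro card_mono) auto
  also have "\<dots> \<le> (\<Sum>i\<in>I. card (F i))"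
    using assms(1) by (rule card_UN_le)
  finally have "real (card X) \<le> (\<Sum>i\<in>I. real (card (F i)))"
    by (simp flip: of_nat_sum)
  also have "\<dots> \<le> (\<Sum>i\<in>I. M)"
    using assms(4) by (rule sum_mono)
  finally show ?thesis
    by simp
qed

lemma card_mult_le_by_translations:
  fixes \<tau> :: "'c::finite \<Rightarrow> 'v \<Rightarrow> 'v"
  assumes "finite V" "W \<subseteq> V" "\<And>c. bij_betw (\<tau> c) V V"
    and "\<And>g. g \<in> V \<Longrightarrow> card {c. \<tau> c g \<in> W} \<le> l"
  shows "CARD('c) * card W \<le> l * card V"
proof -
  have "card {g \<in> V. \<tau> c g \<in> W} = card W" for c
  proof -
    have "W \<subseteq> \<tau> c ` {g \<in> V. \<tau> c g \<in> W}"
    proof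
      fix w assume "w \<in> W"
      moreover obtain g where "g \<in> V" "w = \<tau> c g"
        using \<open>w \<in> W\<close> assms(2) bij_betw_imp_surj_on[OF assms(3)[of c]] by blast
      ultimately show "w \<in> \<tau> c ` {g \<in> V. \<tau> c g \<in> W}"
        by blast
    qed
    then have "bij_betw (\<tau> c) {g \<in> V. \<tau> c g \<in> W} W"
      by (intro bij_betw_subset[OF assms(3)]) auto
    then show ?thesis
      by (rule bij_betw_same_card)
  qed
  then have "CARD('c) * card W = (\<Sum>c\<in>UNIV. card {g \<in> V. \<tau> c g \<in> W})"
    by simp
  also have "\<dots> = (\<Sum>g\<in>V. card {c \<in> UNIV. \<tau> c g \<in> W})"
    using assms(1) by (intro sum_card_filter_swap[symmetric]) simp_all
  also have "\<dots> \<le> (\<Sum>g\<in>V. l)"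
    using assms(4) by (intro sum_mono) simp
  finally show ?thesis
    by (simp add: mult.commute)
qed

lemma funs_with_default_eq_image:
  "{f. (\<forall>i\<in>I. f i \<in> U i) \<and> (\<forall>i. i \<notin> I \<longrightarrow> f i = z)} = (\<lambda>f i. if i \<in> I then f i else z) ` PiE I U"
proof (intro equalityI subsetI)
  fix f assume f: "f \<in> {f. (\<forall>i\<in>I. f i \<in> U i) \<and> (\<forall>i. i \<notin> I \<longrightarrow> f i = z)}"
  then have "f = (\<lambda>i. if i \<in> I then restrict f I i else z)"
    by (auto simp: fun_eq_iff)
  moreover have "restrict f I \<in> PiE I U"
    using f by auto
  ultimately show "f \<in> (\<lambda>f i. if i \<in> I then f i else z) ` PiE I U"
    by (rule image_eqI)
next
  fix f assume "f \<in> (\<lambda>f i. if i \<in> I then f i else z) ` PiE I U"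
  then obtain g where "g \<in> PiE I U" "f = (\<lambda>i. if i \<in> I then g i else z)"
    by blast
  then show "f \<in> {f. (\<forall>i\<in>I. f i \<in> U i) \<and> (\<forall>i. i \<notin> I \<longrightarrow> f i = z)}"
    by (simp add: PiE_iff)
qed

lemma card_funs_with_default:
  assumes "finite I"
  shows "card {f. (\<forall>i\<in>I. f i \<in> U i) \<and> (\<forall>i. i \<notin> I \<longrightarrow> f i = z)} = (\<Prod>i\<in>I. card (U i))"
proof -
  have "inj_on (\<lambda>f i. if i \<in> I then f i else z) (PiE I U)"
  proof (rule inj_onI)
    fix f g assume fg: "f \<in> PiE I U" "g \<in> PiE I U"
      and eq: "(\<lambda>i. if i \<in> I then f i else z) = (\<lambda>i. if i \<in> I then g i else z)"
    show "f = g"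
    proof (rule PiE_ext[OF fg])
      fix i assume "i \<in> I"
      then show "f i = g i"
        using fun_cong[OF eq, of i] by simp
    qed
  qed
  then show ?thesis
    unfolding funs_with_default_eq_image by (simp add: card_image card_PiE assms)
qed

lemma finite_funs_with_default:
  assumes "finite I" "\<And>i. i \<in> I \<Longrightarrow> finite (U i)"
  shows "finite {f. (\<forall>i\<in>I. f i \<in> U i) \<and> (\<forall>i. i \<notin> I \<longrightarrow> f i = z)}"
  unfolding funs_with_default_eq_image using assms by (intro finite_imageI finite_PiE)

lemma first_occurrences:
  fixes f :: "nat \<Rightarrow> 'b" and J :: "nat set"
  defines "A \<equiv> {j\<in>J. \<forall>j'\<in>J. j' < j \<longrightarrow> f j' \<noteq> f j}"
  shows "inj_on f A" and "j \<in> J \<Longrightarrow> \<exists>j0\<in>A. j0 \<le> j \<and> f j0 = f j"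
proof -
  show "inj_on f A"
  proof (rule inj_onI, rule ccontr)
    fix x y assume xy: "x \<in> A" "y \<in> A" "f x = f y" "x \<noteq> y"
    then consider "x < y" | "y < x"
      by linarith
    then show False
      using xy unfolding A_def by cases auto
  qed
next
  assume "j \<in> J"
  define j0 where "j0 = (LEAST j'. j' \<in> J \<and> f j' = f j)"
  have j0: "j0 \<in> J" "f j0 = f j" "j0 \<le> j"
    unfolding j0_def using \<open>j \<in> J\<close> by (auto intro: LeastI2 Least_le)
  have "f j' \<noteq> f j0" if "j' \<in> J" "j' < j0" for j'
    using not_less_Least[OF that(2)[unfolded j0_def]] that(1) j0(2) by auto
  then have "j0 \<in> A"
    using j0(1) by (auto simp: A_def)
  then show "\<exists>j0\<in>A. j0 \<le> j \<and> f j0 = f j"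
    using j0 by blast
qed

section \<open>Vectors, matrices and linear codes\<close>

definition dot :: "nat \<Rightarrow> (nat \<Rightarrow> 'a::comm_semiring_1) \<Rightarrow> (nat \<Rightarrow> 'a) \<Rightarrow> 'a" where
  "dot k g m = (\<Sum>j<k. g j * m j)"

lemma dot_add_scaled_left: "dot k (\<lambda>x. g x + c * h x) m = dot k g m + c * dot k h m"
  by (simp add: dot_def algebra_simps sum.distrib sum_distrib_left)

lemma dot_diff_right:
  "dot k g (\<lambda>x. m x - m' x) = dot k g m - dot k g (m' :: nat \<Rightarrow> 'a::comm_ring_1)"
  by (simp add: dot_def algebra_simps sum_subtractf)

lemma dot_zero_right [simp]: "dot k g (\<lambda>_. 0) = 0"
  by (simp add: dot_def)

lemma dot_single_left:
  assumes "j < k"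
  shows "dot k (\<lambda>x. if x = j then c else 0) m = c * m j"
proof -
  have "dot k (\<lambda>x. if x = j then c else 0) m = (\<Sum>x<k. if x = j then c * m x else 0)"
    unfolding dot_def by (rule sum.cong) auto
  then show ?thesis
    using assms by simp
qed

lemma vecs_eq: "vecs k = {f. (\<forall>i\<in>{..<k}. f i \<in> UNIV) \<and> (\<forall>i. i \<notin> {..<k} \<longrightarrow> f i = 0)}"
  by (auto simp: vecs_def)

lemma card_vecs: "card (vecs k :: (nat \<Rightarrow> 'a::zero) set) = CARD('a) ^ k"
  unfolding vecs_eq card_funs_with_default[OF finite_lessThan] by simp

lemma finite_vecs: "finite (vecs k :: (nat \<Rightarrow> 'a::{finite,zero}) set)"
  unfolding vecs_eq by (rule finite_funs_with_default) auto

lemma vecs_neq_imp_less: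
  assumes "x \<in> vecs n" "y \<in> vecs n" "x i \<noteq> y i"
  shows "i < n"
proof (rule ccontr)
  assume "\<not> i < n"
  then have "x i = 0" "y i = 0"
    using assms(1,2) by (auto simp: vecs_def)
  then show False
    using assms(3) by simp
qed

lemma mats_eq: "mats n k = {G. (\<forall>i\<in>{..<n}. G i \<in> vecs k) \<and> (\<forall>i. i \<notin> {..<n} \<longrightarrow> G i = (\<lambda>_. 0))}"
  by (auto simp: mats_def vecs_def fun_eq_iff)

lemma mats_row: "G \<in> mats n k \<Longrightarrow> i < n \<Longrightarrow> G i \<in> vecs k"
  by (auto simp: mats_def vecs_def)

lemma card_mats_rows:
  assumes "\<And>i. i < n \<Longrightarrow> U i \<subseteq> vecs k"
  shows "card {G \<in> mats n k. \<forall>i<n. G i \<in> U i} = (\<Prod>i<n. card (U i))"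
proof -
  have "{G \<in> mats n k. \<forall>i<n. G i \<in> U i}
      = {G. (\<forall>i\<in>{..<n}. G i \<in> U i) \<and> (\<forall>i. i \<notin> {..<n} \<longrightarrow> G i = (\<lambda>_. 0))}"
    using assms by (auto simp: mats_eq)
  then show ?thesis
    using card_funs_with_default[OF finite_lessThan] by simp
qed

lemma card_mats: "card (mats n k :: (nat \<Rightarrow> nat \<Rightarrow> 'a::zero) set) = CARD('a) ^ (k * n)"
proof -
  have "mats n k = {G \<in> mats n k. \<forall>i<n. G i \<in> (vecs k :: (nat \<Rightarrow> 'a) set)}"
    by (auto simp: mats_row)
  also have "card \<dots> = CARD('a) ^ (k * n)"
    by (simp add: card_mats_rows card_vecs power_mult)
  finally show ?thesis .
qed

lemma finite_mats: "finite (mats n k :: (nat \<Rightarrow> nat \<Rightarrow> 'a::{finite,zero}) set)"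
  unfolding mats_eq by (rule finite_funs_with_default) (auto simp: finite_vecs)

lemma mem_lin_code_iff:
  "x \<in> lin_code n k G \<longleftrightarrow> (\<exists>m\<in>vecs k. x = (\<lambda>i. if i < n then dot k (G i) m else 0))"
  by (simp only: lin_code_def dot_def image_iff)

section \<open>Triangular systems\<close>

definition triangular :: "nat \<Rightarrow> nat \<Rightarrow> (nat \<Rightarrow> nat \<Rightarrow> 'a::comm_semiring_1) \<Rightarrow> bool" where
  "triangular k s d \<longleftrightarrow> (\<exists>h. \<forall>j\<in>{1..<s}. h j \<in> vecs k \<and> dot k (h j) (d j) \<noteq> 0 \<and>
      (\<forall>j'\<in>{1..<j}. dot k (h j) (d j') = 0))"

lemma triangular_solvable:
  fixes d :: "nat \<Rightarrow> nat \<Rightarrow> 'a::field"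
  assumes "triangular k s d"
  shows "\<exists>g\<in>vecs k. \<forall>j\<in>{1..<s}. dot k g (d j) = u j"
proof -
  obtain h where h: "\<And>j. j \<in> {1..<s} \<Longrightarrow> h j \<in> vecs k \<and> dot k (h j) (d j) \<noteq> 0 \<and>
      (\<forall>j'\<in>{1..<j}. dot k (h j) (d j') = 0)"
    using assms unfolding triangular_def by blast
  have "\<exists>g\<in>vecs k. \<forall>j\<in>{1..<m}. dot k g (d j) = u j" if "m \<le> s" for m
    using that
  proof (induction m)
    case 0
    show ?case
      by (rule bexI[of _ "\<lambda>_. 0"]) (auto simp: vecs_def)
  next
    case (Suc m)
    then obtain g where g: "g \<in> vecs k" "\<forall>j\<in>{1..<m}. dot k g (d j) = u j"
      by auto
    show ?case
    proof (cases "m = 0")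
      case True
      then show ?thesis
        using g by auto
    next
      case False
      then have m: "m \<in> {1..<s}"
        using Suc.prems by auto
      define c where "c = (u m - dot k g (d m)) / dot k (h m) (d m)"
      define g' where "g' = (\<lambda>x. g x + c * h m x)"
      have "g' \<in> vecs k"
        using g(1) h[OF m] by (auto simp: vecs_def g'_def)
      moreover have "dot k g' (d j) = u j" if "j \<in> {1..<Suc m}" for j
      proof (cases "j = m")
        case True
        then show ?thesis
          using h[OF m] unfolding g'_def dot_add_scaled_left c_def by simp
      next
        case False
        then show ?thesis
          using that g h[OF m] by (simp add: g'_def dot_add_scaled_left)
      qed
      ultimately show ?thesis
        by blast
    qed
  qed
  then show ?thesis
    by simp
qed

definition repeating_rows ::
    "nat \<Rightarrow> (nat \<Rightarrow> nat \<Rightarrow> 'a::comm_semiring_1) \<Rightarrow> nat set \<Rightarrow> nat set \<Rightarrow> (nat \<Rightarrow> 'a) set" where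
  "repeating_rows k d A B = {g \<in> vecs k. \<forall>j\<in>B. dot k g (d j) \<in> (\<lambda>a. dot k g (d a)) ` A}"

(* Translating g along h fixes the values on A \<union> B and shifts the value on j through all of 'a;
   at most card A of these shifts land in the smaller set. *)
lemma card_repeating_rows_insert:
  fixes d :: "nat \<Rightarrow> nat \<Rightarrow> 'a::{finite,field}"
  assumes h: "h \<in> vecs k" "dot k h (d j) = 1" "\<forall>b\<in>A \<union> B. dot k h (d b) = 0"
    and A: "finite A" "card A \<le> l"
  shows "CARD('a) * card (repeating_rows k d A (insert j B)) \<le> l * card (repeating_rows k d A B)"
proof (rule card_mult_le_by_translations)
  define \<tau> where "\<tau> c g = (\<lambda>x. g x + c * h x)" for c :: 'a and g
  have dot_\<tau>: "dot k (\<tau> c g) (d b) = dot k g (d b) + c * dot k h (d b)" for c g b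
    by (simp add: \<tau>_def dot_add_scaled_left)
  have \<tau>_vecs: "\<tau> c g \<in> vecs k" if "g \<in> vecs k" for c g
    using that h(1) by (auto simp: vecs_def \<tau>_def)
  have \<tau>_inverse: "\<tau> (- c) (\<tau> c g) = g" for c g
    by (auto simp: \<tau>_def algebra_simps)
  have \<tau>_rows: "\<tau> c g \<in> repeating_rows k d A B" if "g \<in> repeating_rows k d A B" for c g
  proof -
    have "dot k (\<tau> c g) (d b) = dot k g (d b)" if "b \<in> A \<union> B" for b
      using h(3) that by (simp add: dot_\<tau>)
    then show ?thesis
      using that \<tau>_vecs unfolding repeating_rows_def by (auto simp: image_iff)
  qed
  show "finite (repeating_rows k d A B)"
    using finite_vecs by (rule rev_finite_subset) (auto simp: repeating_rows_def)
  show "repeating_rows k d A (insert j B) \<subseteq> repeating_rows k d A B"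
    by (auto simp: repeating_rows_def)
  show "bij_betw (\<tau> c) (repeating_rows k d A B) (repeating_rows k d A B)" for c
    by (rule bij_betw_byWitness[where f' = "\<tau> (- c)"])
      (use \<tau>_inverse[of "- c"] \<tau>_inverse \<tau>_rows in \<open>auto simp: image_subset_iff\<close>)
  show "card {c. \<tau> c g \<in> repeating_rows k d A (insert j B)} \<le> l"
    if "g \<in> repeating_rows k d A B" for g
  proof -
    have "{c. \<tau> c g \<in> repeating_rows k d A (insert j B)}
        \<subseteq> (\<lambda>a. dot k g (d a) - dot k g (d j)) ` A"
    proof
      fix c assume "c \<in> {c. \<tau> c g \<in> repeating_rows k d A (insert j B)}"
      then obtain a where "a \<in> A" "dot k (\<tau> c g) (d j) = dot k (\<tau> c g) (d a)"
        unfolding repeating_rows_def by auto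
      then show "c \<in> (\<lambda>a. dot k g (d a) - dot k g (d j)) ` A"
        using h(2,3) by (auto simp: dot_\<tau> algebra_simps)
    qed
    then have "card {c. \<tau> c g \<in> repeating_rows k d A (insert j B)} \<le> card A"
      using A(1) by (meson card_image_le card_mono finite_imageI le_trans)
    then show ?thesis
      using A(2) by simp
  qed
qed

lemma card_repeating_rows_le:
  fixes d :: "nat \<Rightarrow> nat \<Rightarrow> 'a::{finite,field}"
  assumes "finite B" "finite A" "A \<inter> B = {}" "card A \<le> l"
    and "\<forall>j\<in>B. \<exists>h\<in>vecs k. dot k h (d j) = 1 \<and> (\<forall>b\<in>A \<union> B - {j}. dot k h (d b) = 0)"
  shows "card (repeating_rows k d A B) * CARD('a) ^ card B \<le> l ^ card B * CARD('a) ^ k"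
  using assms
proof (induction B rule: finite_induct)
  case empty
  show ?case
    by (simp add: repeating_rows_def card_vecs)
next
  case (insert j B)
  have IH: "card (repeating_rows k d A B) * CARD('a) ^ card B \<le> l ^ card B * CARD('a) ^ k"
    using insert.prems by (intro insert.IH) blast+
  obtain h where h: "h \<in> vecs k" "dot k h (d j) = 1" "\<forall>b\<in>A \<union> B. dot k h (d b) = 0"
    using insert.prems insert.hyps(2) by fastforce
  have "card (repeating_rows k d A (insert j B)) * CARD('a) ^ card (insert j B)
      = (CARD('a) * card (repeating_rows k d A (insert j B))) * CARD('a) ^ card B"
    using insert.hyps by simp
  also have "\<dots> \<le> (l * card (repeating_rows k d A B)) * CARD('a) ^ card B"
    using card_repeating_rows_insert[OF h insert.prems(1,3)] by simp
  also have "\<dots> = l * (card (repeating_rows k d A B) * CARD('a) ^ card B)"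
    by simp
  also have "\<dots> \<le> l * (l ^ card B * CARD('a) ^ k)"
    using IH by (rule mult_left_mono) simp
  also have "\<dots> = l ^ card (insert j B) * CARD('a) ^ k"
    using insert.hyps by simp
  finally show ?case .
qed

lemma card_repeating_rows_triangular:
  fixes d :: "nat \<Rightarrow> nat \<Rightarrow> 'a::{finite,field}"
  assumes "triangular k s d" "d 0 = (\<lambda>_. 0)"
    and "A \<subseteq> {..<s}" "B \<subseteq> {1..<s}" "A \<inter> B = {}" "card A \<le> l"
  shows "real (card (repeating_rows k d A B)) \<le> real CARD('a) ^ k * (real l / real CARD('a)) ^ card B"
proof -
  have "card (repeating_rows k d A B) * CARD('a) ^ card B \<le> l ^ card B * CARD('a) ^ k"
  proof (rule card_repeating_rows_le)
    show "finite B" "finite A"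
      using assms(3,4) finite_subset by blast+
    show "\<forall>j\<in>B. \<exists>h\<in>vecs k. dot k h (d j) = 1 \<and> (\<forall>b\<in>A \<union> B - {j}. dot k h (d b) = 0)"
    proof
      fix j assume "j \<in> B"
      obtain h where h: "h \<in> vecs k" "\<forall>b\<in>{1..<s}. dot k h (d b) = (if b = j then 1 else 0)"
        using triangular_solvable[OF assms(1), of "\<lambda>b. if b = j then 1 else 0"] by blast
      have "dot k h (d b) = (if b = j then 1 else 0)" if "b \<in> A \<union> B" for b
        using h(2) assms(2-4) that \<open>j \<in> B\<close> by (cases "b = 0") auto
      then show "\<exists>h\<in>vecs k. dot k h (d j) = 1 \<and> (\<forall>b\<in>A \<union> B - {j}. dot k h (d b) = 0)"
        using h(1) \<open>j \<in> B\<close> by (intro bexI[of _ h] conjI ballI) auto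
    qed
  qed (use assms in auto)
  then have "real (card (repeating_rows k d A B) * CARD('a) ^ card B) \<le> real (l ^ card B * CARD('a) ^ k)"
    by (simp only: of_nat_le_iff)
  then have "real (card (repeating_rows k d A B)) \<le> real l ^ card B * real CARD('a) ^ k / real CARD('a) ^ card B"
    by (simp add: pos_le_divide_eq)
  then show ?thesis
    by (simp add: power_divide mult.commute)
qed

lemma card_orthogonal_vecs:
  fixes m :: "nat \<Rightarrow> 'a::{finite,field}"
  assumes "m \<in> vecs k" "m \<noteq> (\<lambda>_. 0)"
  shows "card {g \<in> vecs k. dot k g m = 0} * CARD('a) \<le> CARD('a) ^ k"
proof -
  obtain j where j: "m j \<noteq> 0"
    using assms(2) by auto
  have "j < k"
    using vecs_neq_imp_less[OF assms(1), of "\<lambda>_. 0"] j by (simp add: vecs_def)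
  define d where "d x = (if x = 1 then m else (\<lambda>_. 0))" for x :: nat
  have "repeating_rows k d {0} {1} = {g \<in> vecs k. dot k g m = 0}"
    by (auto simp: repeating_rows_def d_def)
  moreover have "card (repeating_rows k d {0} {1}) * CARD('a) ^ card {1::nat} \<le> 1 ^ card {1::nat} * CARD('a) ^ k"
  proof (rule card_repeating_rows_le)
    show "\<forall>b\<in>{1::nat}. \<exists>h\<in>vecs k. dot k h (d b) = 1 \<and> (\<forall>b'\<in>{0} \<union> {1} - {b}. dot k h (d b') = 0)"
      using j \<open>j < k\<close>
      by (intro ballI bexI[of _ "\<lambda>x. if x = j then 1 / m j else 0"])
        (auto simp: d_def dot_single_left vecs_def)
  qed auto
  ultimately show ?thesis
    by simp
qed

section \<open>Codewords with many zeros\<close>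

lemma card_mats_vanishing_on:
  fixes m :: "nat \<Rightarrow> 'a::{finite,field}"
  assumes "m \<in> vecs k" "m \<noteq> (\<lambda>_. 0)" "Z \<subseteq> {..<n}"
  shows "real (card {G \<in> mats n k. \<forall>i\<in>Z. dot k (G i) m = 0})
    \<le> real CARD('a) ^ (k * n) * (1 / real CARD('a)) ^ card Z"
proof -
  let ?q = "real CARD('a)"
  define U where "U i = (if i \<in> Z then {g \<in> vecs k. dot k g m = 0} else vecs k)" for i
  have "{G \<in> mats n k. \<forall>i\<in>Z. dot k (G i) m = 0} = {G \<in> mats n k. \<forall>i<n. G i \<in> U i}"
    using assms(3) by (auto simp: U_def mats_row)
  then have "real (card {G \<in> mats n k. \<forall>i\<in>Z. dot k (G i) m = 0}) = (\<Prod>i<n. real (card (U i)))"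
    by (simp add: card_mats_rows U_def)
  also have "\<dots> \<le> (\<Prod>i<n. ?q ^ k * (if i \<in> Z then 1 / ?q else 1))"
  proof (rule prod_mono)
    fix i
    have "real (card {g \<in> vecs k. dot k g m = 0}) * ?q \<le> ?q ^ k"
      using card_orthogonal_vecs[OF assms(1,2)] by (metis of_nat_le_iff of_nat_mult of_nat_power)
    then show "0 \<le> real (card (U i)) \<and> real (card (U i)) \<le> ?q ^ k * (if i \<in> Z then 1 / ?q else 1)"
      by (simp add: U_def card_vecs field_simps)
  qed
  also have "\<dots> = ?q ^ (k * n) * (1 / ?q) ^ card Z"
    using assms(3) by (simp add: prod.distrib prod.If_cases power_mult Int_absorb1)
  finally show ?thesis .
qed

definition low_distance_mats :: "nat \<Rightarrow> nat \<Rightarrow> real \<Rightarrow> (nat \<Rightarrow> nat \<Rightarrow> 'a::comm_semiring_1) set" where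
  "low_distance_mats n k z = {G \<in> mats n k. \<exists>m\<in>vecs k.
      (\<exists>i<n. dot k (G i) m \<noteq> 0) \<and> real (card {i\<in>{..<n}. dot k (G i) m = 0}) > z}"

lemma card_low_distance_mats:
  "real (card (low_distance_mats n k z :: (nat \<Rightarrow> nat \<Rightarrow> 'a::{finite,field}) set))
    \<le> real CARD('a) ^ k * 2 ^ n * (real CARD('a) ^ (k * n) * real CARD('a) powr (- z))"
proof -
  let ?q = "real CARD('a)"
  define F where "F = (\<lambda>(m, Z). {G \<in> mats n k. \<forall>i\<in>Z. dot k (G i) m = (0::'a)})"
  define I where "I = (vecs k - {\<lambda>_. 0} :: (nat \<Rightarrow> 'a) set) \<times> {Z. Z \<subseteq> {..<n} \<and> real (card Z) > z}"
  have "I \<subseteq> vecs k \<times> Pow {..<n}"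
    by (auto simp: I_def)
  then have "card I \<le> CARD('a) ^ k * 2 ^ n"
    using card_mono[of "vecs k \<times> Pow {..<n}" I] by (simp add: finite_vecs card_cartesian_product card_vecs card_Pow)
  then have "real (card I) \<le> real (CARD('a) ^ k * 2 ^ n)"
    by (simp only: of_nat_le_iff)
  then have card_I: "real (card I) \<le> ?q ^ k * 2 ^ n"
    by simp
  have "real (card (low_distance_mats n k z :: (nat \<Rightarrow> nat \<Rightarrow> 'a) set)) \<le> real (card I) * (?q ^ (k * n) * ?q powr (- z))"
  proof (rule card_le_union_bound)
    show "finite I"
      using \<open>I \<subseteq> vecs k \<times> Pow {..<n}\<close> by (rule finite_subset) (simp add: finite_vecs)
    show "low_distance_mats n k z \<subseteq> (\<Union>i\<in>I. F i)"
    proof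
      fix G :: "nat \<Rightarrow> nat \<Rightarrow> 'a" assume "G \<in> low_distance_mats n k z"
      then obtain m where "G \<in> mats n k" "m \<in> vecs k" "\<exists>i<n. dot k (G i) m \<noteq> 0"
        "real (card {i\<in>{..<n}. dot k (G i) m = 0}) > z"
        unfolding low_distance_mats_def by blast
      then show "G \<in> (\<Union>i\<in>I. F i)"
        unfolding I_def F_def by (intro UN_I[of "(m, {i\<in>{..<n}. dot k (G i) m = 0})"]) auto
    qed
    show "finite (F i)" for i
      using finite_mats by (rule rev_finite_subset) (auto simp: F_def split: prod.splits)
    show "real (card (F i)) \<le> ?q ^ (k * n) * ?q powr (- z)" if i: "i \<in> I" for i
    proof -
      obtain m Z where mZ: "i = (m, Z)" "m \<in> vecs k" "m \<noteq> (\<lambda>_. 0)" "Z \<subseteq> {..<n}" "real (card Z) > z"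
        using i unfolding I_def by auto
      have "real (card (F i)) \<le> ?q ^ (k * n) * (1 / ?q) ^ card Z"
        unfolding mZ(1) F_def using card_mats_vanishing_on[OF mZ(2-4)] by simp
      also have "(1 / ?q) ^ card Z = ?q powr (- real (card Z))"
        by (simp add: powr_minus powr_realpow power_one_over divide_inverse power_inverse)
      also have "\<dots> \<le> ?q powr (- z)"
        using mZ(5) by (intro powr_mono) auto
      finally show ?thesis
        by (simp add: mult_left_mono)
    qed
  qed
  also have "\<dots> \<le> ?q ^ k * 2 ^ n * (?q ^ (k * n) * ?q powr (- z))"
    using card_I by (rule mult_right_mono) simp
  finally show ?thesis .
qed

section \<open>Staircases bound the list size\<close>

definition staircase :: "nat \<Rightarrow> (nat \<Rightarrow> 'a) set \<Rightarrow> nat \<Rightarrow> bool" where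
  "staircase n X s \<longleftrightarrow> (\<exists>a p. (\<forall>j<s. a j \<in> X) \<and> (\<forall>j\<in>{1..<s}. p j < n \<and>
      a j (p j) \<noteq> a 0 (p j) \<and> (\<forall>j'\<in>{1..<j}. a j' (p j) = a 0 (p j))))"

lemma staircase_two:
  assumes "X \<subseteq> vecs n" "x \<in> X" "y \<in> X" "x \<noteq> y"
  shows "staircase n X 2"
proof -
  obtain i where i: "x i \<noteq> y i"
    using assms(4) by (auto simp: fun_eq_iff)
  then have "i < n"
    using assms(1-3) vecs_neq_imp_less by blast
  have "{1..<2::nat} = {1}"
    by auto
  then show ?thesis
    unfolding staircase_def using assms(2,3) i \<open>i < n\<close>
    by (intro exI[of _ "\<lambda>j. if j = 0 then x else y"] exI[of _ "\<lambda>_. i"]) auto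
qed

lemma card_le_one_without_staircase_two:
  fixes X :: "(nat \<Rightarrow> 'a::{finite,zero}) set"
  assumes "X \<subseteq> vecs n" "\<not> staircase n X 2"
  shows "card X \<le> 1"
proof (rule ccontr)
  assume "\<not> card X \<le> 1"
  moreover have "finite X"
    using assms(1) finite_vecs by (rule finite_subset)
  ultimately obtain x y where "x \<in> X" "y \<in> X" "x \<noteq> y"
    using card_le_Suc0_iff_eq[of X] by auto
  then show False
    using staircase_two[OF assms(1)] assms(2) by blast
qed

lemma staircase_extend:
  assumes "staircase n {x\<in>X. x i = v} s" "1 \<le> s" "i < n" "w \<in> X" "w i \<noteq> v"
  shows "staircase n X (Suc s)"
proof -
  obtain a p where a: "\<forall>j<s. a j \<in> {x\<in>X. x i = v}"
    and p: "\<forall>j\<in>{1..<s}. p j < n \<and> a j (p j) \<noteq> a 0 (p j) \<and> (\<forall>j'\<in>{1..<j}. a j' (p j) = a 0 (p j))"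
    using assms(1) unfolding staircase_def by blast
  have "a j i = v" if "j < s" for j
    using a that by auto
  then have "\<forall>j\<in>{1..<Suc s}. (p(s := i)) j < n \<and> (a(s := w)) j ((p(s := i)) j) \<noteq> (a(s := w)) 0 ((p(s := i)) j) \<and>
      (\<forall>j'\<in>{1..<j}. (a(s := w)) j' ((p(s := i)) j) = (a(s := w)) 0 ((p(s := i)) j))"
    using p assms(2,3,5) by (auto simp: less_Suc_eq)
  moreover have "\<forall>j<Suc s. (a(s := w)) j \<in> X"
    using a assms(4) by (auto simp: less_Suc_eq)
  ultimately show ?thesis
    unfolding staircase_def by blast
qed

lemma card_mult_le_by_fibre_bound:
  fixes X :: "(nat \<Rightarrow> 'a::{finite,zero}) set"
  assumes X: "X \<subseteq> vecs n" "x \<in> X" "y \<in> X" "x \<noteq> y"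
    and agree: "\<And>x. x \<in> X \<Longrightarrow> t \<le> real (card {i\<in>{..<n}. x i \<in> S i})"
    and S: "\<And>i. i < n \<Longrightarrow> card (S i) \<le> l"
    and dist: "\<And>x y. x \<in> X \<Longrightarrow> y \<in> X \<Longrightarrow> x \<noteq> y \<Longrightarrow> real (card {i\<in>{..<n}. x i = y i}) \<le> z"
    and gap: "c * real n \<le> t - z"
    and fibre: "\<And>i v. i < n \<Longrightarrow> \<exists>u\<in>X. u i \<noteq> v \<Longrightarrow> real (card {u\<in>X. u i = v}) \<le> M"
    and "0 \<le> M"
  shows "real (card X) * c \<le> real l * M"
proof -
  obtain i0 where "x i0 \<noteq> y i0"
    using X(4) by (auto simp: fun_eq_iff)
  then have "i0 < n"
    using vecs_neq_imp_less[of x n y i0] X by blast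
  then have "0 < n"
    by simp
  define Z where "Z = {i\<in>{..<n}. \<forall>u\<in>X. \<forall>v\<in>X. u i = v i}"
  have "Z \<subseteq> {i\<in>{..<n}. x i = y i}"
    using X unfolding Z_def by auto
  then have Z: "real (card Z) \<le> z"
    using card_mono[of "{i\<in>{..<n}. x i = y i}" Z] dist[OF X(2-4)] by simp
  have "real (card X) * (c * real n) \<le> real (card ({..<n} - Z)) * (real l * M)"
  proof (rule card_mult_le_double_counting[where P = "\<lambda>u i. u i \<in> S i"])
    show "finite X"
      using X(1) finite_vecs by (rule finite_subset)
    show "c * real n \<le> real (card {i\<in>{..<n} - Z. u i \<in> S i})" if "u \<in> X" for u
      using card_filter_le_card_diff_add[of "{..<n}" Z "\<lambda>i. u i \<in> S i"] agree[OF that] Z gap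
      by (force simp: Z_def)
    show "real (card {u\<in>X. u i \<in> S i}) \<le> real l * M" if i: "i \<in> {..<n} - Z" for i
    proof -
      obtain u1 u2 where "u1 \<in> X" "u2 \<in> X" "u1 i \<noteq> u2 i"
        using i by (auto simp: Z_def)
      then have "\<exists>u\<in>X. u i \<noteq> v" for v
        by metis
      then have "real (card {u\<in>X. u i = v}) \<le> M" for v
        using i by (intro fibre) auto
      then have "real (card {u\<in>X. u i \<in> S i}) \<le> real (card (S i)) * M"
        by (intro card_preimage_le_by_fibres) auto
      also have "\<dots> \<le> real l * M"
        using S[of i] i \<open>0 \<le> M\<close> by (intro mult_right_mono) auto
      finally show ?thesis .
    qed
  qed simp
  also have "\<dots> \<le> real n * (real l * M)"
    using \<open>0 \<le> M\<close> card_mono[of "{..<n}" "{..<n} - Z"] by (intro mult_right_mono) auto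
  finally have "real n * (real (card X) * c) \<le> real n * (real l * M)"
    by (simp add: algebra_simps)
  then show ?thesis
    using \<open>0 < n\<close> by (simp add: mult_le_cancel_left)
qed

lemma card_le_without_staircase:
  fixes X :: "(nat \<Rightarrow> 'a::{finite,zero}) set"
  assumes "X \<subseteq> vecs n"
    and agree: "\<And>x. x \<in> X \<Longrightarrow> t \<le> real (card {i\<in>{..<n}. x i \<in> S i})"
    and S: "\<And>i. i < n \<Longrightarrow> card (S i) \<le> l"
    and dist: "\<And>x y. x \<in> X \<Longrightarrow> y \<in> X \<Longrightarrow> x \<noteq> y \<Longrightarrow> real (card {i\<in>{..<n}. x i = y i}) \<le> z"
    and gap: "c * real n \<le> t - z" and "0 < c" "c \<le> real l"
    and "\<not> staircase n X (j + 2)"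
  shows "real (card X) \<le> (real l / c) ^ j"
  using assms(1,2,4,8)
proof (induction j arbitrary: X)
  case 0
  then have "card X \<le> 1"
    using card_le_one_without_staircase_two[of X n] by (simp add: numeral_2_eq_2)
  then show ?case
    by simp
next
  case (Suc j)
  have K: "1 \<le> real l / c"
    using \<open>0 < c\<close> \<open>c \<le> real l\<close> by simp
  show ?case
  proof (cases "\<exists>x\<in>X. \<exists>y\<in>X. x \<noteq> y")
    case False
    moreover have "finite X"
      using Suc.prems(1) finite_vecs by (rule finite_subset)
    ultimately have "card X \<le> 1"
      using card_le_Suc0_iff_eq[of X] by auto
    then show ?thesis
      using one_le_power[OF K, of "Suc j"] by linarith
  next
    case True
    then obtain x y where xy: "x \<in> X" "y \<in> X" "x \<noteq> y"
      by blast
    have "real (card X) * c \<le> real l * (real l / c) ^ j"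
    proof (rule card_mult_le_by_fibre_bound[OF Suc.prems(1) xy Suc.prems(2) S Suc.prems(3) gap])
      show "real (card {u\<in>X. u i = v}) \<le> (real l / c) ^ j" if "i < n" "\<exists>u\<in>X. u i \<noteq> v" for i v
      proof (rule Suc.IH)
        show "\<not> staircase n {u\<in>X. u i = v} (j + 2)"
          using Suc.prems(4) staircase_extend[of n X i v "j + 2"] that by auto
      qed (use Suc.prems in auto)
      show "0 \<le> (real l / c) ^ j"
        using K by (intro zero_le_power) linarith
    qed
    then show ?thesis
      using \<open>0 < c\<close> by (simp add: field_simps)
  qed
qed

section \<open>Codes containing a staircase\<close>

(* At a coordinate i, A indexes the first occurrences of the symbols of S i among a_0, ..., a_(s-1)
   and B the later repetitions of them. *)
definition patterns :: "nat \<Rightarrow> nat \<Rightarrow> (nat set \<times> nat set) set" where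
  "patterns s l = {(A, B). A \<subseteq> {..<s} \<and> card A \<le> l \<and> B \<subseteq> {1..<s} \<and> A \<inter> B = {}}"

lemma finite_patterns: "finite (patterns s l)"
  by (rule finite_subset[of _ "Pow {..<s} \<times> Pow {..<s}"]) (auto simp: patterns_def)

lemma card_patterns_le_sum: "card (patterns s l) \<le> (\<Sum>a\<le>l. (s choose a) * 2 ^ (s - a))"
proof -
  define As where "As a = {A. A \<subseteq> {..<s} \<and> card A = a}" for a
  have fin_As: "finite (As a)" for a
    by (rule finite_subset[of _ "Pow {..<s}"]) (auto simp: As_def)
  have "patterns s l \<subseteq> Sigma (\<Union>a\<le>l. As a) (\<lambda>A. Pow ({..<s} - A))"
    by (auto simp: patterns_def As_def)
  then have "card (patterns s l) \<le> card (Sigma (\<Union>a\<le>l. As a) (\<lambda>A. Pow ({..<s} - A)))"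
    by (intro card_mono) (auto simp: fin_As)
  also have "\<dots> = (\<Sum>A\<in>(\<Union>a\<le>l. As a). 2 ^ card ({..<s} - A))"
    by (simp add: fin_As card_Pow)
  also have "\<dots> = (\<Sum>a\<le>l. \<Sum>A\<in>As a. 2 ^ card ({..<s} - A))"
    by (rule sum.UNION_disjoint) (auto simp: fin_As As_def)
  also have "\<dots> = (\<Sum>a\<le>l. (s choose a) * 2 ^ (s - a))"
  proof (rule sum.cong)
    fix a
    have "(\<Sum>A\<in>As a. 2 ^ card ({..<s} - A)) = (\<Sum>A\<in>As a. (2::nat) ^ (s - a))"
      by (rule sum.cong) (auto simp: As_def card_Diff_subset finite_subset)
    then show "(\<Sum>A\<in>As a. 2 ^ card ({..<s} - A)) = (s choose a) * 2 ^ (s - a)"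
      using n_subsets[of "{..<s}" a] by (simp add: As_def)
  qed simp
  finally show ?thesis .
qed

lemma sum_binomial_pow2_le: "(\<Sum>a\<le>l. real (s choose a) * 2 ^ (s - a)) \<le> 2 ^ s * (1 + real s / 2) ^ l"
proof -
  have "real (s choose a) * 2 ^ (s - a) \<le> 2 ^ s * (real (l choose a) * (real s / 2) ^ a * 1 ^ (l - a))"
    if "a \<le> l" for a
  proof (cases "a \<le> s")
    case True
    have "s choose a \<le> s ^ a"
      using True by (rule binomial_le_pow)
    also have "\<dots> \<le> (l choose a) * s ^ a"
      using zero_less_binomial[OF that] by (simp add: Suc_le_eq)
    finally have "real (s choose a) \<le> real (l choose a) * real s ^ a"
      by (simp flip: of_nat_power of_nat_mult)
    then have "real (s choose a) * 2 ^ (s - a) \<le> real (l choose a) * real s ^ a * 2 ^ (s - a)"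
      by (rule mult_right_mono) simp
    also have "\<dots> = 2 ^ s * (real (l choose a) * (real s / 2) ^ a * 1 ^ (l - a))"
      using True by (simp add: power_divide field_simps flip: power_add)
    finally show ?thesis .
  qed (simp add: binomial_eq_0)
  then have "(\<Sum>a\<le>l. real (s choose a) * 2 ^ (s - a))
      \<le> (\<Sum>a\<le>l. 2 ^ s * (real (l choose a) * (real s / 2) ^ a * 1 ^ (l - a)))"
    by (intro sum_mono) simp
  also have "\<dots> = 2 ^ s * (real s / 2 + 1) ^ l"
    by (simp add: binomial_ring[of "real s / 2" 1 l] sum_distrib_left)
  finally show ?thesis
    by (simp add: add.commute)
qed

lemma card_patterns: "real (card (patterns s l)) \<le> 2 ^ s * (1 + real s / 2) ^ l"
proof -
  have "real (card (patterns s l)) \<le> real (\<Sum>a\<le>l. (s choose a) * 2 ^ (s - a))"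
    using card_patterns_le_sum by (simp only: of_nat_le_iff)
  also have "\<dots> = (\<Sum>a\<le>l. real (s choose a) * 2 ^ (s - a))"
    by simp
  also have "\<dots> \<le> 2 ^ s * (1 + real s / 2) ^ l"
    by (rule sum_binomial_pow2_le)
  finally show ?thesis .
qed

definition diff_families :: "nat \<Rightarrow> nat \<Rightarrow> (nat \<Rightarrow> nat \<Rightarrow> 'a::zero) set" where
  "diff_families k s = {d. (\<forall>j\<in>{1..<s}. d j \<in> vecs k) \<and> (\<forall>j. j \<notin> {1..<s} \<longrightarrow> d j = (\<lambda>_. 0))}"

definition pattern_families :: "nat \<Rightarrow> nat \<Rightarrow> nat \<Rightarrow> real \<Rightarrow> (nat \<Rightarrow> nat set \<times> nat set) set" where
  "pattern_families n s l b = {P. (\<forall>i\<in>{..<n}. P i \<in> patterns s l) \<and>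
      (\<forall>i. i \<notin> {..<n} \<longrightarrow> P i = ({}, {})) \<and> b \<le> real (\<Sum>i<n. card (snd (P i)))}"

definition staircase_event ::
    "nat \<Rightarrow> nat \<Rightarrow> (nat \<Rightarrow> nat \<Rightarrow> 'a::comm_semiring_1) \<Rightarrow> (nat \<Rightarrow> nat set \<times> nat set) \<Rightarrow> (nat \<Rightarrow> nat \<Rightarrow> 'a) set" where
  "staircase_event n k d P = {G \<in> mats n k. \<forall>i<n. G i \<in> repeating_rows k d (fst (P i)) (snd (P i))}"

lemma card_diff_families:
  "card (diff_families k s :: (nat \<Rightarrow> nat \<Rightarrow> 'a::zero) set) = CARD('a) ^ (k * (s - 1))"
  unfolding diff_families_def card_funs_with_default[OF finite_atLeastLessThan]
  by (simp add: card_vecs power_mult)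

lemma finite_diff_families: "finite (diff_families k s :: (nat \<Rightarrow> nat \<Rightarrow> 'a::{finite,zero}) set)"
  unfolding diff_families_def by (rule finite_funs_with_default) (auto simp: finite_vecs)

lemma pattern_families_subset:
  "pattern_families n s l b \<subseteq> {P. (\<forall>i\<in>{..<n}. P i \<in> patterns s l) \<and> (\<forall>i. i \<notin> {..<n} \<longrightarrow> P i = ({}, {}))}"
  unfolding pattern_families_def by auto

lemma finite_pattern_families: "finite (pattern_families n s l b)"
  by (rule finite_subset[OF pattern_families_subset], rule finite_funs_with_default)
    (auto simp: finite_patterns)

lemma card_pattern_families: "card (pattern_families n s l b) \<le> card (patterns s l) ^ n"
proof -
  have "card (pattern_families n s l b)
      \<le> card {P. (\<forall>i\<in>{..<n}. P i \<in> patterns s l) \<and> (\<forall>i. i \<notin> {..<n} \<longrightarrow> P i = ({}, {}))}"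
    by (rule card_mono[OF _ pattern_families_subset], rule finite_funs_with_default)
      (auto simp: finite_patterns)
  then show ?thesis
    using card_funs_with_default[OF finite_lessThan, of n "\<lambda>_. patterns s l" "({}, {})"] by simp
qed

lemma pattern_families_memD:
  assumes "P \<in> pattern_families n s l b" "i < n"
  shows "fst (P i) \<subseteq> {..<s}" "snd (P i) \<subseteq> {1..<s}" "fst (P i) \<inter> snd (P i) = {}" "card (fst (P i)) \<le> l"
proof -
  have "P i \<in> patterns s l"
    using assms by (simp add: pattern_families_def)
  then show "fst (P i) \<subseteq> {..<s}" "snd (P i) \<subseteq> {1..<s}" "fst (P i) \<inter> snd (P i) = {}" "card (fst (P i)) \<le> l"
    by (cases "P i"; simp add: patterns_def)+
qed

lemma card_staircase_event:
  fixes d :: "nat \<Rightarrow> nat \<Rightarrow> 'a::{finite,field}"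
  assumes d: "triangular k s d" "d 0 = (\<lambda>_. 0)" and P: "P \<in> pattern_families n s l b"
    and l: "0 < l" "l \<le> CARD('a)"
  shows "real (card (staircase_event n k d P)) \<le> real CARD('a) ^ (k * n) * (real l / real CARD('a)) powr b"
proof -
  let ?q = "real CARD('a)"
  let ?W = "\<lambda>i. repeating_rows k d (fst (P i)) (snd (P i))"
  have "real (card (staircase_event n k d P)) = (\<Prod>i<n. real (card (?W i)))"
    unfolding staircase_event_def by (subst card_mats_rows) (auto simp: repeating_rows_def)
  also have "\<dots> \<le> (\<Prod>i<n. ?q ^ k * (real l / ?q) ^ card (snd (P i)))"
    using card_repeating_rows_triangular[OF d pattern_families_memD[OF P]] by (intro prod_mono) simp
  also have "\<dots> = ?q ^ (k * n) * (real l / ?q) ^ (\<Sum>i<n. card (snd (P i)))"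
    by (simp add: prod.distrib power_sum power_mult)
  also have "\<dots> \<le> ?q ^ (k * n) * (real l / ?q) powr b"
  proof (rule mult_left_mono)
    have "b \<le> real (\<Sum>i<n. card (snd (P i)))"
      using P by (simp add: pattern_families_def)
    then show "(real l / ?q) ^ (\<Sum>i<n. card (snd (P i))) \<le> (real l / ?q) powr b"
      using l by (simp add: powr_realpow[symmetric] powr_mono')
  qed simp
  finally show ?thesis .
qed

lemma first_occurrence_pattern:
  fixes f :: "nat \<Rightarrow> 'a::finite" and s :: nat
  assumes "card S = l"
  defines "J \<equiv> {j\<in>{..<s}. f j \<in> S}"
  defines "A \<equiv> {j\<in>J. \<forall>j'\<in>J. j' < j \<longrightarrow> f j' \<noteq> f j}"
  shows "(A, J - A) \<in> patterns s l" "card J \<le> card (J - A) + l"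
    and "\<And>j. j \<in> J - A \<Longrightarrow> \<exists>j0\<in>A. f j = f j0"
proof -
  have "A \<subseteq> J"
    by (auto simp: A_def)
  have "card A = card (f ` A)"
    using first_occurrences(1)[of f J] by (simp add: A_def card_image)
  also have "\<dots> \<le> l"
    using card_mono[of S "f ` A"] assms(1) by (auto simp: A_def J_def)
  finally have "card A \<le> l" .
  have repeat: "\<exists>j0\<in>A. j0 < j \<and> f j0 = f j" if j: "j \<in> J - A" for j
  proof -
    obtain j0 where "j0 \<in> A" "j0 \<le> j" "f j0 = f j"
      using first_occurrences(2)[of j J f] j unfolding A_def by blast
    moreover have "j0 \<noteq> j"
      using j \<open>j0 \<in> A\<close> by blast
    ultimately show ?thesis
      by (auto simp: le_less)
  qed
  then show "\<exists>j0\<in>A. f j = f j0" if "j \<in> J - A" for j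
    using that by (metis (full_types))
  have "J - A \<subseteq> {1..<s}"
    using repeat by (fastforce simp: J_def)
  then show "(A, J - A) \<in> patterns s l"
    using \<open>A \<subseteq> J\<close> \<open>card A \<le> l\<close> by (auto simp: patterns_def J_def)
  show "card J \<le> card (J - A) + l"
    using \<open>A \<subseteq> J\<close> \<open>card A \<le> l\<close> card_Diff_subset[of A J] card_mono[of J A]
    by (simp add: J_def finite_subset)
qed

lemma exists_repetition_pattern:
  fixes a :: "nat \<Rightarrow> nat \<Rightarrow> 'a::finite"
  assumes S: "\<And>i. i < n \<Longrightarrow> card (S i) = l"
    and agree: "\<And>j. j < s \<Longrightarrow> t \<le> real (card {i\<in>{..<n}. a j i \<in> S i})"
  obtains P where "P \<in> pattern_families n s l (real s * t - real l * real n)"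
    and "\<And>i j. i < n \<Longrightarrow> j \<in> snd (P i) \<Longrightarrow> \<exists>j0\<in>fst (P i). a j i = a j0 i"
proof -
  define J where "J i = {j\<in>{..<s}. a j i \<in> S i}" for i
  define A where "A i = {j\<in>J i. \<forall>j'\<in>J i. j' < j \<longrightarrow> a j' i \<noteq> a j i}" for i
  define P where "P i = (if i < n then (A i, J i - A i) else ({}, {}))" for i
  have pattern: "(A i, J i - A i) \<in> patterns s l" "card (J i) \<le> card (J i - A i) + l"
    "\<And>j. j \<in> J i - A i \<Longrightarrow> \<exists>j0\<in>A i. a j i = a j0 i" if "i < n" for i
    using first_occurrence_pattern[where f = "\<lambda>j. a j i" and s = s, OF S[OF that]]
    unfolding J_def A_def by auto
  have "real s * t \<le> (\<Sum>j<s. real (card {i\<in>{..<n}. a j i \<in> S i}))"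
    using sum_mono[of "{..<s}" "\<lambda>_. t", OF agree] by simp
  also have "\<dots> = (\<Sum>i<n. real (card (J i)))"
    using sum_card_filter_swap[of "{..<s}" "{..<n}" "\<lambda>j i. a j i \<in> S i"]
    by (simp add: J_def flip: of_nat_sum)
  also have "\<dots> \<le> (\<Sum>i<n. real (card (snd (P i))) + real l)"
  proof (rule sum_mono)
    fix i assume "i \<in> {..<n}"
    then have "card (J i) \<le> card (snd (P i)) + l"
      using pattern(2) by (simp add: P_def)
    then show "real (card (J i)) \<le> real (card (snd (P i))) + real l"
      by (simp only: of_nat_add[symmetric] of_nat_le_iff)
  qed
  finally have "real s * t - real l * real n \<le> real (\<Sum>i<n. card (snd (P i)))"
    by (simp add: sum.distrib mult.commute)
  moreover have "P i = ({}, {})" if "\<not> i < n" for i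
    using that by (simp add: P_def)
  moreover have "\<exists>j0\<in>fst (P i). a j i = a j0 i" if "i < n" "j \<in> snd (P i)" for i j
    using pattern(3)[of i j] that by (simp add: P_def)
  ultimately show ?thesis
    using pattern(1) by (intro that[of P]) (auto simp: pattern_families_def P_def)
qed

lemma obtain_diff_family:
  fixes G :: "nat \<Rightarrow> nat \<Rightarrow> 'a::comm_ring_1"
  assumes "\<And>j. j < s \<Longrightarrow> a j \<in> lin_code n k G"
  obtains d where "d \<in> diff_families k s"
    and "\<And>j i. j < s \<Longrightarrow> i < n \<Longrightarrow> a j i - a 0 i = dot k (G i) (d j)"
proof -
  obtain m where m: "\<And>j. j < s \<Longrightarrow> m j \<in> vecs k \<and> a j = (\<lambda>i. if i < n then dot k (G i) (m j) else 0)"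
    using assms unfolding mem_lin_code_iff by metis
  define d where "d j = (if j \<in> {1..<s} then (\<lambda>x. m j x - m 0 x) else (\<lambda>_. 0))" for j
  show ?thesis
  proof
    show "d \<in> diff_families k s"
      using m by (auto simp: diff_families_def d_def vecs_def)
    show "a j i - a 0 i = dot k (G i) (d j)" if "j < s" "i < n" for j i
      using that m[of j] m[of 0] by (cases "j = 0") (auto simp: d_def dot_diff_right)
  qed
qed

lemma triangular_if_staircase:
  fixes G :: "nat \<Rightarrow> nat \<Rightarrow> 'a::comm_ring_1"
  assumes G: "G \<in> mats n k"
    and diff: "\<And>j i. j < s \<Longrightarrow> i < n \<Longrightarrow> a j i - a 0 i = dot k (G i) (d j)"
    and p: "\<And>j. j \<in> {1..<s} \<Longrightarrow> p j < n \<and> a j (p j) \<noteq> a 0 (p j) \<and> (\<forall>j'\<in>{1..<j}. a j' (p j) = a 0 (p j))"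
  shows "triangular k s d"
  unfolding triangular_def
proof (intro exI[of _ "\<lambda>j. G (p j)"] ballI)
  fix j assume j: "j \<in> {1..<s}"
  have "dot k (G (p j)) (d j) = a j (p j) - a 0 (p j)"
    using diff[of j "p j"] p[OF j] j by simp
  then have "dot k (G (p j)) (d j) \<noteq> 0"
    using p[OF j] by simp
  moreover have "G (p j) \<in> vecs k"
    using mats_row[OF G] p[OF j] by simp
  moreover have "dot k (G (p j)) (d j') = 0" if "j' \<in> {1..<j}" for j'
  proof -
    have "j' < s" "a j' (p j) = a 0 (p j)"
      using that j p[OF j] by auto
    then show ?thesis
      using diff[of j' "p j"] p[OF j] by simp
  qed
  ultimately show "G (p j) \<in> vecs k \<and> dot k (G (p j)) (d j) \<noteq> 0 \<and> (\<forall>j'\<in>{1..<j}. dot k (G (p j)) (d j') = 0)"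
    by blast
qed

lemma mem_staircase_event:
  fixes G :: "nat \<Rightarrow> nat \<Rightarrow> 'a::comm_ring_1"
  assumes G: "G \<in> mats n k" and P: "P \<in> pattern_families n s l b"
    and diff: "\<And>j i. j < s \<Longrightarrow> i < n \<Longrightarrow> a j i - a 0 i = dot k (G i) (d j)"
    and rep: "\<And>i j. i < n \<Longrightarrow> j \<in> snd (P i) \<Longrightarrow> \<exists>j0\<in>fst (P i). a j i = a j0 i"
  shows "G \<in> staircase_event n k d P"
proof -
  have "dot k (G i) (d j) \<in> (\<lambda>j0. dot k (G i) (d j0)) ` fst (P i)" if i: "i < n" and j: "j \<in> snd (P i)" for i j
  proof -
    obtain j0 where j0: "j0 \<in> fst (P i)" "a j i = a j0 i"
      using rep[OF i j] by blast
    moreover have "j < s" "j0 < s"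
      using pattern_families_memD[OF P i] j j0(1) by auto
    ultimately have "dot k (G i) (d j) = dot k (G i) (d j0)"
      using diff[of j i] diff[of j0 i] i by simp
    then show ?thesis
      using j0(1) by blast
  qed
  then show ?thesis
    using G mats_row[OF G] by (simp add: staircase_event_def repeating_rows_def)
qed

lemma staircase_in_staircase_event:
  fixes G :: "nat \<Rightarrow> nat \<Rightarrow> 'a::{finite,field}"
  assumes G: "G \<in> mats n k" and S: "\<And>i. i < n \<Longrightarrow> card (S i) = l"
    and "staircase n (lr_ball n \<rho> S \<inter> lin_code n k G) s"
  shows "\<exists>d\<in>diff_families k s. triangular k s d \<and>
    (\<exists>P\<in>pattern_families n s l (real s * ((1 - \<rho>) * real n) - real l * real n). G \<in> staircase_event n k d P)"
proof -
  obtain a p where a: "\<And>j. j < s \<Longrightarrow> a j \<in> lr_ball n \<rho> S \<inter> lin_code n k G"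
    and p: "\<And>j. j \<in> {1..<s} \<Longrightarrow> p j < n \<and> a j (p j) \<noteq> a 0 (p j) \<and> (\<forall>j'\<in>{1..<j}. a j' (p j) = a 0 (p j))"
    using assms(3) unfolding staircase_def by blast
  obtain d where d: "d \<in> diff_families k s"
    and diff: "\<And>j i. j < s \<Longrightarrow> i < n \<Longrightarrow> a j i - a 0 i = dot k (G i) (d j)"
    using obtain_diff_family[of s a n k G] a by blast
  have agree: "(1 - \<rho>) * real n \<le> real (card {i\<in>{..<n}. a j i \<in> S i})" if "j < s" for j
    using a[OF that] by (simp add: lr_ball_def)
  obtain P where P: "P \<in> pattern_families n s l (real s * ((1 - \<rho>) * real n) - real l * real n)"
    and rep: "\<And>i j. i < n \<Longrightarrow> j \<in> snd (P i) \<Longrightarrow> \<exists>j0\<in>fst (P i). a j i = a j0 i"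
    using exists_repetition_pattern[of n S l s "(1 - \<rho>) * real n" a, OF S agree] by blast
  then show ?thesis
    using d triangular_if_staircase[OF G diff p] mem_staircase_event[OF G P diff rep] by blast
qed

definition staircase_mats :: "nat \<Rightarrow> nat \<Rightarrow> real \<Rightarrow> nat \<Rightarrow> nat \<Rightarrow> (nat \<Rightarrow> nat \<Rightarrow> 'a::comm_semiring_1) set" where
  "staircase_mats n k \<rho> l s =
    {G \<in> mats n k. \<exists>S. (\<forall>i<n. card (S i) = l) \<and> staircase n (lr_ball n \<rho> S \<inter> lin_code n k G) s}"

lemma card_triangular_diff_pattern_families:
  "real (card ({d \<in> diff_families k s :: (nat \<Rightarrow> nat \<Rightarrow> 'a::{finite,field}) set. triangular k s d}
      \<times> pattern_families n s l b))
    \<le> real CARD('a) ^ (k * (s - 1)) * (2 ^ s * (1 + real s / 2) ^ l) ^ n"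
proof -
  have "card ({d \<in> diff_families k s :: (nat \<Rightarrow> nat \<Rightarrow> 'a) set. triangular k s d} \<times> pattern_families n s l b)
      \<le> card (diff_families k s :: (nat \<Rightarrow> nat \<Rightarrow> 'a) set) * card (patterns s l) ^ n"
    unfolding card_cartesian_product
    by (intro mult_le_mono card_mono card_pattern_families finite_diff_families) auto
  then have "real (card ({d \<in> diff_families k s :: (nat \<Rightarrow> nat \<Rightarrow> 'a) set. triangular k s d} \<times> pattern_families n s l b))
      \<le> real CARD('a) ^ (k * (s - 1)) * real (card (patterns s l)) ^ n"
    by (simp add: card_diff_families flip: of_nat_power of_nat_mult)
  also have "\<dots> \<le> real CARD('a) ^ (k * (s - 1)) * (2 ^ s * (1 + real s / 2) ^ l) ^ n"
    by (intro mult_left_mono power_mono card_patterns) auto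
  finally show ?thesis .
qed

lemma card_staircase_mats:
  fixes \<rho> :: real
  assumes "0 < l" "l \<le> CARD('a)"
  shows "real (card (staircase_mats n k \<rho> l s :: (nat \<Rightarrow> nat \<Rightarrow> 'a::{finite,field}) set))
    \<le> real CARD('a) ^ (k * (s - 1)) * (2 ^ s * (1 + real s / 2) ^ l) ^ n
      * (real CARD('a) ^ (k * n) * (real l / real CARD('a)) powr (real s * ((1 - \<rho>) * real n) - real l * real n))"
proof -
  let ?q = "real CARD('a)" and ?b = "real s * ((1 - \<rho>) * real n) - real l * real n"
  define I where "I = {d \<in> diff_families k s :: (nat \<Rightarrow> nat \<Rightarrow> 'a) set. triangular k s d} \<times> pattern_families n s l ?b"
  have "real (card (staircase_mats n k \<rho> l s :: (nat \<Rightarrow> nat \<Rightarrow> 'a) set))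
    \<le> real (card I) * (?q ^ (k * n) * (real l / ?q) powr ?b)"
  proof (rule card_le_union_bound[where F = "\<lambda>(d, P). staircase_event n k d P"])
    show "finite I"
      unfolding I_def by (simp add: finite_diff_families finite_pattern_families)
    show "staircase_mats n k \<rho> l s \<subseteq> (\<Union>i\<in>I. case i of (d, P) \<Rightarrow> staircase_event n k d P)"
    proof
      fix G :: "nat \<Rightarrow> nat \<Rightarrow> 'a"
      assume "G \<in> staircase_mats n k \<rho> l s"
      then obtain S where "G \<in> mats n k" "\<And>i. i < n \<Longrightarrow> card (S i) = l"
        "staircase n (lr_ball n \<rho> S \<inter> lin_code n k G) s"
        unfolding staircase_mats_def by blast
      then obtain d P where "d \<in> diff_families k s" "triangular k s d" "P \<in> pattern_families n s l ?b"
        "G \<in> staircase_event n k d P"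
        using staircase_in_staircase_event by blast
      then show "G \<in> (\<Union>i\<in>I. case i of (d, P) \<Rightarrow> staircase_event n k d P)"
        unfolding I_def by (intro UN_I[of "(d, P)"]) auto
    qed
    show "finite (case i of (d, P) \<Rightarrow> staircase_event n k d P)" for i :: "(nat \<Rightarrow> nat \<Rightarrow> 'a) \<times> _"
      using finite_mats by (rule rev_finite_subset) (auto simp: staircase_event_def split: prod.splits)
    show "real (card (case i of (d, P) \<Rightarrow> staircase_event n k d P)) \<le> ?q ^ (k * n) * (real l / ?q) powr ?b"
      if i: "i \<in> I" for i
    proof -
      obtain d P where dP: "i = (d, P)" "d \<in> diff_families k s" "triangular k s d"
        "P \<in> pattern_families n s l ?b"
        using i unfolding I_def by blast
      then have "d 0 = (\<lambda>_. 0)"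
        by (simp add: diff_families_def)
      then show ?thesis
        using card_staircase_event[OF dP(3) _ dP(4) assms] dP(1) by simp
    qed
  qed
  also have "\<dots> \<le> ?q ^ (k * (s - 1)) * (2 ^ s * (1 + real s / 2) ^ l) ^ n * (?q ^ (k * n) * (real l / ?q) powr ?b)"
    unfolding I_def by (intro mult_right_mono card_triangular_diff_pattern_families) simp
  finally show ?thesis .
qed

section \<open>Numerical estimates\<close>

lemma ln2_ge_half: "1 / 2 \<le> ln (2::real)"
  using exp_half_le2 by (subst ln_ge_iff) auto

lemma ln_add_one_le_mult_ln2:
  assumes "1 \<le> (u::real)"
  shows "ln (u + 1) \<le> u * ln 2"
proof -
  have "(u - 1) * (1 / 2) \<le> (u - 1) * ln 2"
    using ln2_ge_half assms by (intro mult_left_mono) auto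
  then have half: "(u + 1) / 2 - 1 \<le> u * ln 2 - ln 2"
    by (simp add: algebra_simps)
  have "ln (u + 1) = ln ((u + 1) / 2) + ln 2"
    using assms by (simp add: ln_div)
  also have "\<dots> \<le> (u + 1) / 2 - 1 + ln 2"
    using ln_le_minus_one[of "(u + 1) / 2"] assms by simp
  also have "\<dots> \<le> u * ln 2"
    using half by linarith
  finally show ?thesis .
qed

lemma ln_one_plus_half_le:
  fixes R \<epsilon> W lam l \<sigma> :: real
  assumes "0 < \<epsilon>" "\<epsilon> < 1" "l = 1 \<or> 2 \<le> l" "lam = ln l"
    and W1: "(8 * R / \<epsilon> + 5) * lam \<le> W" and W2: "4 * ln 2 / \<epsilon> \<le> W"
    and "0 \<le> \<sigma>" "\<sigma> \<le> 2 * l / \<epsilon> + 2"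
  shows "ln (1 + \<sigma> / 2) \<le> W - 2 * R * lam / \<epsilon> - 2 * ln 2 / \<epsilon>"
proof -
  define u where "u = 1 / \<epsilon>"
  define A where "A = R * lam * u"
  define B where "B = u * ln 2"
  have u: "1 < u"
    using assms(1,2) by (simp add: u_def)
  have W1': "8 * A + 5 * lam \<le> W" and W2': "4 * B \<le> W"
    using W1 W2 by (simp_all add: A_def B_def u_def algebra_simps)
  have "2 * l / \<epsilon> = 2 * (l * u)"
    by (simp add: u_def)
  then have \<sigma>: "1 + \<sigma> / 2 \<le> l * u + 2" "0 < 1 + \<sigma> / 2"
    using assms(7,8) by linarith+
  have "ln (1 + \<sigma> / 2) \<le> W - 2 * A - 2 * B"
    using assms(3)
  proof
    assume "l = 1"
    then have "ln (1 + \<sigma> / 2) \<le> ln (2 * (u + 1))"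
      using \<sigma> u by (subst ln_le_cancel_iff) auto
    also have "\<dots> = ln 2 + ln (u + 1)"
      using u by (intro ln_mult_pos) auto
    also have "\<dots> \<le> 2 * B"
    proof -
      have "ln (u + 1) \<le> u * ln 2" "1 * ln 2 \<le> u * ln 2"
        using u ln2_ge_half by (auto intro: ln_add_one_le_mult_ln2 mult_right_mono)
      then show ?thesis
        unfolding B_def by linarith
    qed
    finally show ?thesis
      using W2' \<open>l = 1\<close> assms(4) by (simp add: A_def)
  next
    assume "2 \<le> l"
    have "ln (1 + \<sigma> / 2) \<le> ln (l * (u + 1))"
      using \<sigma> u \<open>2 \<le> l\<close> by (subst ln_le_cancel_iff) (auto simp: algebra_simps)
    also have "\<dots> = lam + ln (u + 1)"
      using u \<open>2 \<le> l\<close> assms(4) by (simp add: ln_mult_pos)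
    also have "\<dots> \<le> lam + B"
      using ln_add_one_le_mult_ln2 u unfolding B_def by simp
    moreover have "0 \<le> lam"
      using \<open>2 \<le> l\<close> assms(4) by simp
    ultimately show ?thesis
      using W1' W2' by linarith
  qed
  then show ?thesis
    by (simp add: A_def B_def u_def)
qed

(* The exponent of the union bound over differences and repetition patterns, divided by n,
   with Q = ln q and lam = ln l. *)
lemma staircase_exponent_ineq:
  fixes R \<epsilon> Q lam l \<sigma> :: real
  assumes "0 < R" "0 < \<epsilon>" "\<epsilon> < 1" "l = 1 \<or> 2 \<le> l" "lam = ln l"
    and Q1: "(8 * R / \<epsilon> + 6) * lam \<le> Q" and Q2: "lam + 4 * ln 2 / \<epsilon> \<le> Q"
    and \<sigma>: "2 * l / \<epsilon> + 1 \<le> \<sigma>" "\<sigma> \<le> 2 * l / \<epsilon> + 2"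
  shows "R * (\<sigma> - 1) * Q + \<sigma> * ln 2 + l * ln (1 + \<sigma> / 2) + (\<sigma> * (R + \<epsilon>) - l) * (lam - Q) \<le> - \<epsilon> * Q / 8"
proof -
  define W where "W = Q - lam"
  define c where "c = \<epsilon> * W - R * lam - ln 2"
  have lam: "0 \<le> lam" "0 \<le> R * lam"
    using assms(1,4,5) by auto
  have W1: "(8 * R / \<epsilon> + 5) * lam \<le> W" and W2: "4 * ln 2 / \<epsilon> \<le> W"
    using Q1 Q2 by (simp_all add: W_def algebra_simps)
  have "0 \<le> 2 * l / \<epsilon>"
    using assms(2,4) by auto
  then have ln_bound: "ln (1 + \<sigma> / 2) \<le> W - 2 * R * lam / \<epsilon> - 2 * ln 2 / \<epsilon>"
    using ln_one_plus_half_le[OF assms(2-5) W1 W2 _ \<sigma>(2)] \<sigma>(1) by simp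
  have "\<epsilon> * ((8 * R / \<epsilon> + 5) * lam) \<le> \<epsilon> * W" "\<epsilon> * (4 * ln 2 / \<epsilon>) \<le> \<epsilon> * W"
    using W1 W2 assms(2) by (intro mult_left_mono; simp)+
  moreover have "\<epsilon> * ((8 * R / \<epsilon> + 5) * lam) = 8 * (R * lam) + 5 * (\<epsilon> * lam)"
    "\<epsilon> * (4 * ln 2 / \<epsilon>) = 4 * ln 2"
    using assms(2) by (simp_all add: field_simps)
  ultimately have \<epsilon>W: "8 * (R * lam) + 5 * (\<epsilon> * lam) \<le> \<epsilon> * W" "4 * ln 2 \<le> \<epsilon> * W"
    by linarith+
  have "0 \<le> \<epsilon> * lam"
    using assms(2) lam by simp
  then have "0 \<le> c"
    using \<epsilon>W lam ln2_ge_half unfolding c_def by linarith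
  then have "(2 * l / \<epsilon> + 1) * c \<le> \<sigma> * c"
    using \<sigma>(1) by (intro mult_right_mono)
  moreover have "(2 * l / \<epsilon> + 1) * c = 2 * l * W - 2 * l * R * lam / \<epsilon> - 2 * l * ln 2 / \<epsilon> + c"
    using assms(2) unfolding c_def by (simp add: field_simps)
  moreover have "l * ln (1 + \<sigma> / 2) \<le> l * (W - 2 * R * lam / \<epsilon> - 2 * ln 2 / \<epsilon>)"
    using ln_bound assms(4) by (intro mult_left_mono) auto
  moreover have "l * (W - 2 * R * lam / \<epsilon> - 2 * ln 2 / \<epsilon>) = l * W - 2 * l * R * lam / \<epsilon> - 2 * l * ln 2 / \<epsilon>"
    by (simp add: algebra_simps)
  moreover have "R * (\<sigma> - 1) * Q + \<sigma> * ln 2 + l * ln (1 + \<sigma> / 2) + (\<sigma> * (R + \<epsilon>) - l) * (lam - Q)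
      = - (\<sigma> * c) - R * W - R * lam + l * ln (1 + \<sigma> / 2) + l * W"
    unfolding c_def W_def by (simp add: algebra_simps)
  moreover have "- \<epsilon> * Q / 8 = - (\<epsilon> * W) / 8 - (\<epsilon> * lam) / 8"
    unfolding W_def by (simp add: algebra_simps)
  moreover have "0 \<le> R * W"
    using assms(1) W2 assms(2) by (simp add: order_trans[OF _ W2])
  ultimately show ?thesis
    using \<epsilon>W lam ln2_ge_half c_def by linarith
qed

lemma low_distance_exponent_bound:
  fixes q R \<epsilon> :: real and n k :: nat
  assumes q: "2 powr (4 / \<epsilon>) \<le> q" and "0 < \<epsilon>" and k: "real k = R * real n"
  shows "q ^ k * 2 ^ n * q powr (- ((R + \<epsilon> / 2) * real n)) \<le> q powr (- \<epsilon> * real n / 8)"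
proof -
  have q0: "0 < q"
    using q by (smt (verit) powr_gt_zero)
  have "(2::real) powr 1 \<le> 2 powr (3 / 2)"
    by (intro powr_mono) auto
  also have "\<dots> = (2 powr (4 / \<epsilon>)) powr (3 * \<epsilon> / 8)"
    using assms(2) by (simp add: powr_powr)
  also have "\<dots> \<le> q powr (3 * \<epsilon> / 8)"
    using q assms(2) by (intro powr_mono2) auto
  finally have "(2::real) ^ n \<le> (q powr (3 * \<epsilon> / 8)) ^ n"
    by (intro power_mono) auto
  also have "\<dots> = q powr (3 * \<epsilon> / 8 * real n)"
    using q0 by (simp add: powr_realpow[symmetric] powr_powr)
  finally have two: "(2::real) ^ n \<le> q powr (3 * \<epsilon> / 8 * real n)" .
  have "q ^ k * 2 ^ n * q powr (- ((R + \<epsilon> / 2) * real n)) = 2 ^ n * q powr (- (\<epsilon> / 2 * real n))"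
    using q0 k by (simp add: powr_realpow[symmetric] powr_add[symmetric] algebra_simps)
  also have "\<dots> \<le> q powr (3 * \<epsilon> / 8 * real n) * q powr (- (\<epsilon> / 2 * real n))"
    using two by (rule mult_right_mono) simp
  also have "\<dots> = q powr (- \<epsilon> * real n / 8)"
    by (simp add: powr_add[symmetric] algebra_simps)
  finally show ?thesis .
qed

lemma staircase_exponent_bound:
  fixes q R \<epsilon> :: real and l n k \<sigma> :: nat
  assumes "0 < R" "0 < \<epsilon>" "R + \<epsilon> < 1" "0 < l" and k: "real k = R * real n"
    and q1: "real l powr (8 * R / \<epsilon> + 6) \<le> q" and q2: "real l * 2 powr (4 / \<epsilon>) \<le> q"
    and \<sigma>: "2 * real l / \<epsilon> + 1 \<le> real \<sigma>" "real \<sigma> \<le> 2 * real l / \<epsilon> + 2"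
  shows "(q ^ k) ^ (\<sigma> - 1) * (2 ^ \<sigma> * (1 + real \<sigma> / 2) ^ l) ^ n
      * (real l / q) powr (real \<sigma> * ((R + \<epsilon>) * real n) - real l * real n)
    \<le> q powr (- \<epsilon> * real n / 8)"
  (is "?lhs \<le> ?rhs")
proof -
  have l: "0 < real l" "real l = 1 \<or> 2 \<le> real l"
    using assms(4) by auto
  have q0: "0 < q"
    using q2 l(1) by (smt (verit) mult_pos_pos powr_gt_zero)
  have "ln (real l powr (8 * R / \<epsilon> + 6)) \<le> ln q"
    using q1 l(1) q0 by (subst ln_le_cancel_iff) auto
  then have Q1: "(8 * R / \<epsilon> + 6) * ln (real l) \<le> ln q"
    using l(1) by (simp add: ln_powr)
  have "ln (real l * 2 powr (4 / \<epsilon>)) \<le> ln q"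
    using q2 l(1) q0 by (subst ln_le_cancel_iff) auto
  then have Q2: "ln (real l) + 4 * ln 2 / \<epsilon> \<le> ln q"
    using l(1) by (simp add: ln_mult_pos ln_powr)
  have "0 \<le> 2 * real l / \<epsilon>"
    using assms(2) by simp
  then have "1 \<le> \<sigma>"
    using \<sigma>(1) by linarith
  then have \<sigma>1: "real (\<sigma> - 1) = real \<sigma> - 1"
    by (simp add: of_nat_diff)
  have "ln ?lhs = real n * (R * (real \<sigma> - 1) * ln q + real \<sigma> * ln 2 + real l * ln (1 + real \<sigma> / 2)
      + (real \<sigma> * (R + \<epsilon>) - real l) * (ln (real l) - ln q))"
    using q0 l(1) k \<sigma>1
    by (simp add: ln_mult_pos ln_realpow ln_powr ln_div add_pos_nonneg algebra_simps)
  also have "\<dots> \<le> real n * (- \<epsilon> * ln q / 8)"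
    using staircase_exponent_ineq[OF assms(1,2) _ l(2) refl Q1 Q2 \<sigma>] assms(1,3)
    by (intro mult_left_mono) auto
  also have "\<dots> = ln ?rhs"
    using q0 by (simp add: ln_powr)
  finally have "ln ?lhs \<le> ln ?rhs" .
  moreover have "0 < ?lhs"
    using q0 l(1) by (simp add: add_pos_nonneg)
  ultimately show ?thesis
    using q0 by (subst (asm) ln_le_cancel_iff) auto
qed

section \<open>List-recoverability of random linear codes\<close>

lemma agreements_le_unless_low_distance:
  fixes G :: "nat \<Rightarrow> nat \<Rightarrow> 'a::comm_ring_1"
  assumes G: "G \<in> mats n k" and low: "G \<notin> low_distance_mats n k z"
    and "x \<in> lin_code n k G" "y \<in> lin_code n k G" "x \<noteq> y"
  shows "real (card {i\<in>{..<n}. x i = y i}) \<le> z"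
proof -
  obtain m1 m2 where m: "m1 \<in> vecs k" "x = (\<lambda>i. if i < n then dot k (G i) m1 else 0)"
    "m2 \<in> vecs k" "y = (\<lambda>i. if i < n then dot k (G i) m2 else 0)"
    using assms(3,4) unfolding mem_lin_code_iff by blast
  define m where "m = (\<lambda>j. m1 j - m2 j)"
  have "m \<in> vecs k"
    using m by (auto simp: m_def vecs_def)
  have dot_m: "dot k (G i) m = dot k (G i) m1 - dot k (G i) m2" for i
    by (simp add: m_def dot_diff_right)
  have eq: "{i\<in>{..<n}. x i = y i} = {i\<in>{..<n}. dot k (G i) m = 0}"
    using m by (auto simp: dot_m)
  obtain i where "x i \<noteq> y i"
    using assms(5) by (auto simp: fun_eq_iff)
  then have "\<exists>i<n. dot k (G i) m \<noteq> 0"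
    using m by (auto simp: dot_m split: if_splits)
  then show ?thesis
    using low G \<open>m \<in> vecs k\<close> eq unfolding low_distance_mats_def by fastforce
qed

lemma list_recoverable_unless_bad:
  fixes G :: "nat \<Rightarrow> nat \<Rightarrow> 'a::{finite,field}"
  assumes G: "G \<in> mats n k" and low: "G \<notin> low_distance_mats n k ((R + \<epsilon> / 2) * real n)"
    and stair: "\<And>S. \<forall>i<n. card (S i) = l \<Longrightarrow>
      \<not> staircase n (lr_ball n (1 - R - \<epsilon>) S \<inter> lin_code n k G) (nat \<lfloor>2 * real l / \<epsilon>\<rfloor> + 2)"
    and "0 < \<epsilon>" "\<epsilon> \<le> 2 * real l"
  shows "list_recoverable n (1 - R - \<epsilon>) l ((2 * real l / \<epsilon>) powr (2 * real l / \<epsilon>)) (lin_code n k G)"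
  unfolding list_recoverable_def
proof (intro allI impI)
  fix S :: "nat \<Rightarrow> 'a set" assume S: "\<forall>i<n. card (S i) = l"
  define K where "K = 2 * real l / \<epsilon>"
  have K: "1 \<le> K"
    using assms(4,5) by (simp add: K_def)
  have "real (card (lr_ball n (1 - R - \<epsilon>) S \<inter> lin_code n k G)) \<le> (real l / (\<epsilon> / 2)) ^ nat \<lfloor>K\<rfloor>"
  proof (rule card_le_without_staircase[where t = "(R + \<epsilon>) * real n" and z = "(R + \<epsilon> / 2) * real n"])
    show "lr_ball n (1 - R - \<epsilon>) S \<inter> lin_code n k G \<subseteq> vecs n"
      by (auto simp: lr_ball_def)
    show "(R + \<epsilon>) * real n \<le> real (card {i\<in>{..<n}. x i \<in> S i})"
      if "x \<in> lr_ball n (1 - R - \<epsilon>) S \<inter> lin_code n k G" for x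
      using that by (simp add: lr_ball_def)
    show "card (S i) \<le> l" if "i < n" for i
      using S that by simp
    show "real (card {i\<in>{..<n}. x i = y i}) \<le> (R + \<epsilon> / 2) * real n"
      if "x \<in> lr_ball n (1 - R - \<epsilon>) S \<inter> lin_code n k G" "y \<in> lr_ball n (1 - R - \<epsilon>) S \<inter> lin_code n k G"
        "x \<noteq> y" for x y
      using agreements_le_unless_low_distance[OF G low] that by blast
    show "\<epsilon> / 2 * real n \<le> (R + \<epsilon>) * real n - (R + \<epsilon> / 2) * real n"
      by (simp add: algebra_simps)
    show "\<not> staircase n (lr_ball n (1 - R - \<epsilon>) S \<inter> lin_code n k G) (nat \<lfloor>K\<rfloor> + 2)"
      using stair S by (simp add: K_def)
  qed (use assms(4,5) in auto)
  also have "\<dots> = K ^ nat \<lfloor>K\<rfloor>"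
    by (simp add: K_def mult.commute)
  also have "\<dots> = K powr real (nat \<lfloor>K\<rfloor>)"
    using K by (intro powr_realpow[symmetric]) linarith
  also have "\<dots> \<le> K powr K"
    using K by (intro powr_mono) auto
  finally show "real (card (lr_ball n (1 - R - \<epsilon>) S \<inter> lin_code n k G)) \<le> (2 * real l / \<epsilon>) powr (2 * real l / \<epsilon>)"
    by (simp add: K_def)
qed

lemma card_low_distance_mats_le:
  fixes R \<epsilon> :: real
  assumes "2 powr (4 / \<epsilon>) \<le> real CARD('a)" "0 < \<epsilon>" "real k = R * real n"
  shows "real (card (low_distance_mats n k ((R + \<epsilon> / 2) * real n) :: (nat \<Rightarrow> nat \<Rightarrow> 'a::{finite,field}) set))
    \<le> real (card (mats n k :: (nat \<Rightarrow> nat \<Rightarrow> 'a) set)) * real CARD('a) powr (- \<epsilon> * real n / 8)"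
proof -
  let ?q = "real CARD('a)"
  have "real (card (low_distance_mats n k ((R + \<epsilon> / 2) * real n) :: (nat \<Rightarrow> nat \<Rightarrow> 'a) set))
      \<le> ?q ^ k * 2 ^ n * (?q ^ (k * n) * ?q powr (- ((R + \<epsilon> / 2) * real n)))"
    by (rule card_low_distance_mats)
  also have "\<dots> = ?q ^ (k * n) * (?q ^ k * 2 ^ n * ?q powr (- ((R + \<epsilon> / 2) * real n)))"
    by (simp only: mult_ac)
  also have "\<dots> \<le> ?q ^ (k * n) * ?q powr (- \<epsilon> * real n / 8)"
    using low_distance_exponent_bound[OF assms] by (intro mult_left_mono) auto
  finally show ?thesis
    by (simp add: card_mats)
qed

lemma card_staircase_mats_le:
  fixes R \<epsilon> :: real
  assumes "0 < R" "0 < \<epsilon>" "R + \<epsilon> < 1" "0 < l" "real k = R * real n"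
    and q1: "real l powr (8 * R / \<epsilon> + 6) \<le> real CARD('a)"
    and q2: "real l * 2 powr (4 / \<epsilon>) \<le> real CARD('a)"
  shows "real (card (staircase_mats n k (1 - R - \<epsilon>) l (nat \<lfloor>2 * real l / \<epsilon>\<rfloor> + 2)
      :: (nat \<Rightarrow> nat \<Rightarrow> 'a::{finite,field}) set))
    \<le> real (card (mats n k :: (nat \<Rightarrow> nat \<Rightarrow> 'a) set)) * real CARD('a) powr (- \<epsilon> * real n / 8)"
proof -
  let ?q = "real CARD('a)" and ?\<sigma> = "nat \<lfloor>2 * real l / \<epsilon>\<rfloor> + 2"
  have "real l * 1 \<le> real l * 2 powr (4 / \<epsilon>)"
    using assms(2) by (intro mult_left_mono ge_one_powr_ge_zero) auto
  then have "l \<le> CARD('a)"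
    using q2 by simp
  have "0 \<le> \<lfloor>2 * real l / \<epsilon>\<rfloor>"
    using assms(2) by simp
  then have \<sigma>: "2 * real l / \<epsilon> + 1 \<le> real ?\<sigma>" "real ?\<sigma> \<le> 2 * real l / \<epsilon> + 2"
    by linarith+
  have rate: "1 - (1 - R - \<epsilon>) = R + \<epsilon>"
    by simp
  have "real (card (staircase_mats n k (1 - R - \<epsilon>) l ?\<sigma> :: (nat \<Rightarrow> nat \<Rightarrow> 'a) set))
      \<le> ?q ^ (k * (?\<sigma> - 1)) * (2 ^ ?\<sigma> * (1 + real ?\<sigma> / 2) ^ l) ^ n
        * (?q ^ (k * n) * (real l / ?q) powr (real ?\<sigma> * ((1 - (1 - R - \<epsilon>)) * real n) - real l * real n))"
    by (rule card_staircase_mats[OF assms(4) \<open>l \<le> CARD('a)\<close>])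
  also have "\<dots> = ?q ^ (k * n) * ((?q ^ k) ^ (?\<sigma> - 1) * (2 ^ ?\<sigma> * (1 + real ?\<sigma> / 2) ^ l) ^ n
        * (real l / ?q) powr (real ?\<sigma> * ((R + \<epsilon>) * real n) - real l * real n))"
    unfolding rate by (simp only: power_mult mult_ac)
  also have "\<dots> \<le> ?q ^ (k * n) * ?q powr (- \<epsilon> * real n / 8)"
    using staircase_exponent_bound[OF assms \<sigma>] by (intro mult_left_mono) auto
  finally show ?thesis
    by (simp add: card_mats)
qed

lemma card_mats_le_good_plus_bad:
  fixes R \<epsilon> :: real
  assumes "0 < \<epsilon>" "\<epsilon> \<le> 2 * real l"
  shows "real (card (mats n k :: (nat \<Rightarrow> nat \<Rightarrow> 'a::{finite,field}) set))
    \<le> real (card {G \<in> mats n k :: (nat \<Rightarrow> nat \<Rightarrow> 'a) set.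
          list_recoverable n (1 - R - \<epsilon>) l ((2 * real l / \<epsilon>) powr (2 * real l / \<epsilon>)) (lin_code n k G)})
      + real (card (low_distance_mats n k ((R + \<epsilon> / 2) * real n) :: (nat \<Rightarrow> nat \<Rightarrow> 'a) set))
      + real (card (staircase_mats n k (1 - R - \<epsilon>) l (nat \<lfloor>2 * real l / \<epsilon>\<rfloor> + 2) :: (nat \<Rightarrow> nat \<Rightarrow> 'a) set))"
    (is "real (card ?M) \<le> real (card ?good) + real (card ?low) + real (card ?stair)")
proof -
  have "?M \<subseteq> ?good \<union> ?low \<union> ?stair"
  proof
    fix G assume "G \<in> ?M"
    then show "G \<in> ?good \<union> ?low \<union> ?stair"
      using list_recoverable_unless_bad[of G n k R \<epsilon> l] assms unfolding staircase_mats_def by blast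
  qed
  moreover have "?good \<union> ?low \<union> ?stair \<subseteq> ?M"
    by (auto simp: low_distance_mats_def staircase_mats_def)
  ultimately have "card ?M \<le> card (?good \<union> ?low \<union> ?stair)"
    by (intro card_mono) (auto intro: finite_subset[OF _ finite_mats])
  also have "\<dots> \<le> card ?good + card ?low + card ?stair"
    using card_Un_le[of "?good \<union> ?low" ?stair] card_Un_le[of ?good ?low] by linarith
  finally show ?thesis
    by linarith
qed

theorem theorem3p1:
  fixes R \<epsilon> :: real and l n k :: nat
    and dummy :: "'a :: {finite, field}"
  assumes "0 < R" and "R < 1" and "0 < \<epsilon>" and "1 - R - \<epsilon> > 0"
    and "l > 0"
    and "real k = R * real n"
    and "real CARD('a) \<ge> real l powr (8 * R / \<epsilon> + 6)"
    and "real CARD('a) \<ge> real l * 2 powr (4 / \<epsilon>)"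
  shows "real (card {G \<in> (mats n k :: (nat \<Rightarrow> nat \<Rightarrow> 'a) set).
             list_recoverable n (1 - R - \<epsilon>) l ((2 * real l / \<epsilon>) powr (2 * real l / \<epsilon>))
               (lin_code n k G)})
         / real (card (mats n k :: (nat \<Rightarrow> nat \<Rightarrow> 'a) set))
       \<ge> 1 - 2 * real CARD('a) powr (- \<epsilon> * real n / 8)"
proof -
  let ?p = "real CARD('a) powr (- \<epsilon> * real n / 8)" and ?M = "mats n k :: (nat \<Rightarrow> nat \<Rightarrow> 'a) set"
  have "1 \<le> real l"
    using assms(5) by simp
  then have "\<epsilon> \<le> 2 * real l" "2 powr (4 / \<epsilon>) \<le> real CARD('a)"
    using assms(1,4,8) by (auto simp: order_trans[OF _ assms(8)])
  have "real (card (low_distance_mats n k ((R + \<epsilon> / 2) * real n) :: (nat \<Rightarrow> nat \<Rightarrow> 'a) set))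
      \<le> real (card ?M) * ?p"
    using \<open>2 powr (4 / \<epsilon>) \<le> real CARD('a)\<close> assms(3,6) by (rule card_low_distance_mats_le)
  moreover have "real (card ?M) * (1 - 2 * ?p) = real (card ?M) - 2 * (real (card ?M) * ?p)"
    by (simp add: algebra_simps)
  moreover have "real (card (staircase_mats n k (1 - R - \<epsilon>) l (nat \<lfloor>2 * real l / \<epsilon>\<rfloor> + 2)
      :: (nat \<Rightarrow> nat \<Rightarrow> 'a) set)) \<le> real (card ?M) * ?p"
    using assms by (intro card_staircase_mats_le) auto
  ultimately have "real (card ?M) * (1 - 2 * ?p) \<le> real (card {G \<in> ?M.
      list_recoverable n (1 - R - \<epsilon>) l ((2 * real l / \<epsilon>) powr (2 * real l / \<epsilon>)) (lin_code n k G)})"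
    using card_mats_le_good_plus_bad[where 'a = 'a, OF assms(3) \<open>\<epsilon> \<le> 2 * real l\<close>, of n k R] by linarith
  moreover have "0 < real (card ?M)"
    by (simp add: card_mats)
  ultimately show ?thesis
    by (simp add: pos_le_divide_eq mult.commute)
qed

end
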